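(* Consider a regular spherically symmetric, asymptotically flat initial data set for the Einstein–Maxwell equations (no magnetic charge). Assume there is a ball $\mathcal{B}=\{l\le l_0\}$ of finite area radius $\mathcal{R}=r(l_0)>0$ such that outside $\mathcal{B}$ the data are electrovacuum and in $\mathcal{B}$ the dominant energy condition holds. Let $Q$ be the total charge of $\mathcal{B}$. If $2\mathcal{R}\le |Q|$, then there are trapped surfaces enclosing $\mathcal{B}$, i.e. the exterior region $\{l\ge l_0\}$ is not untrapped.
   Context: Regular spherically symmetric initial data: manifold $\mathbb{R}^3$, metric $h=dl^2+r(l)^2(d\theta^2+\sin^2\theta\,d\phi^2)$, $r$ smooth, $r(0)=0$, $r'(0)=1$; $K_{ij}=n_in_jK_l+(h_{ij}-n_in_j)K_r$, $n=\partial_l$; constraints $K_r(K_r+2K_l)-\frac1{r^2}(r'^2+2rr''-1)=8\pi\mu$, $K_r'+\frac{r'}{r}(K_r-K_l)=4\pi j$; dominant energy condition $\mu\ge|j|$; radial electric field $E$ with $\frac1{r^2}(Er^2)'=4\pi\rho$, magnetic field zero; $\mu=\mu_M+\frac{E^2}{8\pi}$. Electrovacuum: $\mu_M=0$, $j=0$, $\rho=0$. Charge $Q=4\pi\int_0^{l_0}\rho r^2dl=E(l_0)r(l_0)^2$. Asymptotic flatness: $h_{ij}=\delta_{ij}+O(r^{-1})$ with derivatives falling off one order faster each, $K_{ij}=O(r^{-2})$, $\partial K=O(r^{-3})$. Null expansions $\theta^\pm=\frac2r(r'\pm K_rr)$; a region is untrapped if $\theta^+\theta^->0$ there and trapped if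 $\theta^+\theta^-<0$. *)

theory Defs
  imports "HOL-Analysis.Analysis" "HOL-Library.Landau_Symbols"
begin

text \<open>Spherically symmetric initial data are described by functions of the radial
 proper-distance coordinate l (only l \<ge> 0 is physically relevant).\<close>

definition smooth_fun :: "(real \<Rightarrow> real) \<Rightarrow> bool" where
  "smooth_fun f \<longleftrightarrow> (\<forall>n x. ((deriv ^^ n) f) differentiable (at x))"

text \<open>Regularity at the centre: r smooth with r(0)=0, r'(0)=1, r>0 away from the centre;
 smoothness of the tensors on R^3 is encoded by smooth odd/even extensions to the real line.\<close>
definition regular_data ::
  "(real \<Rightarrow> real) \<Rightarrow> (real \<Rightarrow> real) \<Rightarrow> (real \<Rightarrow> real) \<Rightarrow> (real \<Rightarrow> real) \<Rightarrow> bool" where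
  "regular_data r Kl Kr E \<longleftrightarrow>
     smooth_fun r \<and> smooth_fun Kl \<and> smooth_fun Kr \<and> smooth_fun E \<and>
     r 0 = 0 \<and> deriv r 0 = 1 \<and> (\<forall>l>0. r l > 0) \<and>
     (\<forall>l. r (-l) = - r l) \<and> (\<forall>l. Kl (-l) = Kl l) \<and> (\<forall>l. Kr (-l) = Kr l) \<and>
     (\<forall>l. E (-l) = - E l) \<and> Kl 0 = Kr 0"

text \<open>Asymptotic flatness, expressed in the area-radius chart x = r(l) n:
 h_ij - delta_ij = O(1/r), one extra power of decay per derivative, K = O(r^-2), dK = O(r^-3).\<close>
definition asymptotically_flat ::
  "(real \<Rightarrow> real) \<Rightarrow> (real \<Rightarrow> real) \<Rightarrow> (real \<Rightarrow> real) \<Rightarrow> bool" where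
  "asymptotically_flat r Kl Kr \<longleftrightarrow>
     filterlim r at_top at_top \<and>
     (\<lambda>l. 1 / (deriv r l)\<^sup>2 - 1) \<in> O[at_top](\<lambda>l. 1 / r l) \<and>
     (\<lambda>l. deriv (\<lambda>s. 1 / (deriv r s)\<^sup>2) l) \<in> O[at_top](\<lambda>l. 1 / (r l)\<^sup>2) \<and>
     Kl \<in> O[at_top](\<lambda>l. 1 / (r l)\<^sup>2) \<and> Kr \<in> O[at_top](\<lambda>l. 1 / (r l)\<^sup>2) \<and>
     deriv Kl \<in> O[at_top](\<lambda>l. 1 / (r l)^3) \<and> deriv Kr \<in> O[at_top](\<lambda>l. 1 / (r l)^3)"

definition theta_plus :: "(real \<Rightarrow> real) \<Rightarrow> (real \<Rightarrow> real) \<Rightarrow> real \<Rightarrow> real" where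
  "theta_plus r Kr l = 2 / r l * (deriv r l + Kr l * r l)"

definition theta_minus :: "(real \<Rightarrow> real) \<Rightarrow> (real \<Rightarrow> real) \<Rightarrow> real \<Rightarrow> real" where
  "theta_minus r Kr l = 2 / r l * (deriv r l - Kr l * r l)"

definition untrapped_on :: "(real \<Rightarrow> real) \<Rightarrow> (real \<Rightarrow> real) \<Rightarrow> real set \<Rightarrow> bool" where
  "untrapped_on r Kr S \<longleftrightarrow> (\<forall>l\<in>S. theta_plus r Kr l * theta_minus r Kr l > 0)"

end

theory Submission
  imports Defs
begin

text \<open>Suppose the exterior were untrapped. Then r' does not vanish there, and since r \<rightarrow> \<infinity>,
  r' > 0 at the boundary of the ball. The Hawking mass m obeys m' = 4\<pi>r^2(\<mu>r' + j r K_r); wherever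
  m < 0 we have r'^2 > 1 + (K_r r)^2, so r' > 0 and the dominant energy condition makes m
  nondecreasing. Since m(0) = 0, this forces m(l0) \<ge> 0. Outside the ball Gauss' law gives
  E r^2 = Q and the Reissner-Nordstrom mass m + Q^2/(2r) is conserved. At l0 it is at least
  Q^2/(2 r(l0)) \<ge> |Q|, while on the sphere with r = |Q| untrappedness (2m < r) makes it less
  than |Q|.\<close>

lemma smooth_fun_deriv: "smooth_fun f \<Longrightarrow> smooth_fun (deriv f)"
  unfolding smooth_fun_def by (metis funpow_Suc_right o_apply)

lemma smooth_fun_has_real_derivative:
  "smooth_fun f \<Longrightarrow> (f has_real_derivative deriv f x) (at x)"
  unfolding smooth_fun_def DERIV_deriv_iff_real_differentiable by (metis funpow_0)

lemma smooth_fun_continuous_on: "smooth_fun f \<Longrightarrow> continuous_on S f"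
  by (meson DERIV_isCont continuous_at_imp_continuous_on smooth_fun_has_real_derivative)

lemma continuous_on_nonvanishing_pos_iff:
  fixes f :: "real \<Rightarrow> real"
  assumes "a \<le> b" "continuous_on {a..b} f" "\<And>x. a \<le> x \<Longrightarrow> x \<le> b \<Longrightarrow> f x \<noteq> 0"
  shows "0 < f a \<longleftrightarrow> 0 < f b"
  using IVT'[of f a 0 b] IVT2'[of f b 0 a] assms by force

lemma continuous_on_last_nonneg:
  fixes f :: "real \<Rightarrow> real"
  assumes "a \<le> b" "continuous_on {a..b} f" "0 \<le> f a"
  obtains c where "a \<le> c" "c \<le> b" "0 \<le> f c" "\<And>x. c < x \<Longrightarrow> x \<le> b \<Longrightarrow> f x < 0"
proof
  define S where "S = {x \<in> {a..b}. 0 \<le> f x}"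
  have "closed S"
    unfolding S_def by (intro continuous_on_closed_Collect_le assms continuous_on_const) simp
  moreover have "a \<in> S" "bdd_above S"
    using assms unfolding S_def by (auto intro: bdd_aboveI[of _ b])
  ultimately have "Sup S \<in> S"
    by (intro closed_contains_Sup) auto
  then show "a \<le> Sup S" "Sup S \<le> b" "0 \<le> f (Sup S)"
    unfolding S_def by auto
  show "f x < 0" if "Sup S < x" "x \<le> b" for x
    using that \<open>a \<le> Sup S\<close> cSup_upper[OF _ \<open>bdd_above S\<close>, of x] unfolding S_def by force
qed

lemma deriv_pos_of_filterlim_at_top:
  fixes f f' :: "real \<Rightarrow> real"
  assumes "filterlim f at_top at_top"
    and "\<And>x. (f has_real_derivative f' x) (at x)"
    and "continuous_on {a..} f'"
    and "\<And>x. a \<le> x \<Longrightarrow> f' x \<noteq> 0"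
  shows "0 < f' a"
proof (rule ccontr)
  assume "\<not> 0 < f' a"
  then have neg: "f' x < 0" if "a \<le> x" for x
    using continuous_on_nonvanishing_pos_iff[of a x f'] continuous_on_subset[OF assms(3)] assms(4) that
    by force
  obtain b where "a \<le> b" "f a < f b"
    using assms(1) unfolding filterlim_at_top_dense eventually_at_top_linorder
    by (metis nle_le)
  moreover have "f b \<le> f a"
    using \<open>a \<le> b\<close> by (intro deriv_nonpos_imp_antimono[OF assms(2)]) (auto intro: less_imp_le neg)
  ultimately show False by simp
qed

lemma filterlim_at_top_IVT:
  fixes f :: "real \<Rightarrow> real"
  assumes "continuous_on {a..} f" "filterlim f at_top at_top" "f a \<le> y"
  obtains x where "a \<le> x" "f x = y"
proof -
  obtain b where "a \<le> b" "y \<le> f b"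
    using assms(2) unfolding filterlim_at_top eventually_at_top_linorder
    by (metis nle_le)
  then show ?thesis
    using IVT'[of f a y b] assms(1,3) that continuous_on_subset[OF assms(1), of "{a..b}"] by auto
qed

lemma dominant_energy_flux_nonneg:
  fixes mu j x y :: real
  assumes "\<bar>j\<bar> \<le> mu" "\<bar>x\<bar> \<le> y"
  shows "0 \<le> mu * y + j * x"
proof -
  have "\<bar>j * x\<bar> \<le> mu * y"
    unfolding abs_mult using assms by (intro mult_mono) auto
  then show ?thesis by linarith
qed

text \<open>The Hawking (Misner-Sharp) mass of the sphere at l; r^2 \<theta>+ \<theta>- / 4 = 1 - 2m/r.\<close>

definition hawking_mass :: "(real \<Rightarrow> real) \<Rightarrow> (real \<Rightarrow> real) \<Rightarrow> real \<Rightarrow> real" where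
  "hawking_mass r Kr l = r l / 2 * (1 - (deriv r l)\<^sup>2 + (Kr l * r l)\<^sup>2)"

lemma deriv_sq_diff_eq_hawking_mass:
  "r l \<noteq> 0 \<Longrightarrow> (deriv r l)\<^sup>2 - (Kr l * r l)\<^sup>2 = 1 - 2 * hawking_mass r Kr l / r l"
  unfolding hawking_mass_def by (simp add: field_simps)

lemma hawking_mass_lt_iff:
  assumes "0 < r l"
  shows "2 * hawking_mass r Kr l < r l \<longleftrightarrow> (Kr l * r l)\<^sup>2 < (deriv r l)\<^sup>2"
proof -
  have "2 * hawking_mass r Kr l = r l * (1 - ((deriv r l)\<^sup>2 - (Kr l * r l)\<^sup>2))"
    unfolding hawking_mass_def by simp
  also have "\<dots> < r l * 1 \<longleftrightarrow> (Kr l * r l)\<^sup>2 < (deriv r l)\<^sup>2"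
    using assms by (subst mult_less_cancel_left_pos) auto
  finally show ?thesis by simp
qed

lemma theta_plus_mult_theta_minus_pos_iff:
  assumes "0 < r l"
  shows "0 < theta_plus r Kr l * theta_minus r Kr l \<longleftrightarrow> (Kr l * r l)\<^sup>2 < (deriv r l)\<^sup>2"
proof -
  have "theta_plus r Kr l * theta_minus r Kr l = 4 * ((deriv r l)\<^sup>2 - (Kr l * r l)\<^sup>2) / (r l)\<^sup>2"
    unfolding theta_plus_def theta_minus_def using assms by (simp add: field_simps power2_eq_square)
  then show ?thesis
    using assms by (simp add: zero_less_divide_iff)
qed

lemma hawking_mass_has_real_derivative:
  fixes r Kl Kr :: "real \<Rightarrow> real" and mu j l :: real
  assumes "smooth_fun r" "smooth_fun Kr" "0 < r l"
    and ham: "Kr l * (Kr l + 2 * Kl l) - ((deriv r l)\<^sup>2 + 2 * r l * deriv (deriv r) l - 1) / (r l)\<^sup>2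
      = 8 * pi * mu"
    and mom: "deriv Kr l + deriv r l / r l * (Kr l - Kl l) = 4 * pi * j"
  shows "(hawking_mass r Kr has_real_derivative 4 * pi * (r l)\<^sup>2 * (mu * deriv r l + j * (Kr l * r l)))
    (at l)"
proof -
  note derivs = smooth_fun_has_real_derivative[OF assms(1)]
    smooth_fun_has_real_derivative[OF smooth_fun_deriv[OF assms(1)]]
    smooth_fun_has_real_derivative[OF assms(2)]
  have "4 * pi * (r l)\<^sup>2 * (mu * deriv r l + j * (Kr l * r l))
      = (r l)\<^sup>2 * (deriv r l * (8 * pi * mu) / 2 + Kr l * r l * (4 * pi * j))"
    by (simp add: algebra_simps)
  also have "\<dots> = deriv r l / 2 * (1 - (deriv r l)\<^sup>2 + (Kr l * r l)\<^sup>2)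
      + r l / 2 * (- 2 * deriv r l * deriv (deriv r) l
                   + 2 * (Kr l * r l) * (deriv Kr l * r l + Kr l * deriv r l))"
    unfolding ham[symmetric] mom[symmetric] using assms(3)
    by (simp add: field_simps power2_eq_square)
  finally show ?thesis
    unfolding hawking_mass_def[abs_def] using derivs
    by (auto intro!: derivative_eq_intros simp: field_simps power2_eq_square)
qed

lemma hawking_mass_deriv_nonneg_of_dominant_energy:
  fixes r Kl Kr :: "real \<Rightarrow> real" and mu j l :: real
  assumes "smooth_fun r" "smooth_fun Kr" "0 < r l"
    and ham: "Kr l * (Kr l + 2 * Kl l) - ((deriv r l)\<^sup>2 + 2 * r l * deriv (deriv r) l - 1) / (r l)\<^sup>2
      = 8 * pi * mu"
    and mom: "deriv Kr l + deriv r l / r l * (Kr l - Kl l) = 4 * pi * j"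
    and "\<bar>j\<bar> \<le> mu" "0 < deriv r l" "(Kr l * r l)\<^sup>2 \<le> (deriv r l)\<^sup>2"
  shows "\<exists>y. (hawking_mass r Kr has_real_derivative y) (at l) \<and> 0 \<le> y"
proof -
  have "\<bar>Kr l * r l\<bar> \<le> deriv r l"
    using assms(7,8) abs_le_square_iff[of "Kr l * r l" "deriv r l"] by simp
  then have "0 \<le> 4 * pi * (r l)\<^sup>2 * (mu * deriv r l + j * (Kr l * r l))"
    using \<open>\<bar>j\<bar> \<le> mu\<close> by (simp add: dominant_energy_flux_nonneg)
  with hawking_mass_has_real_derivative[of r Kr l Kl mu j, OF assms(1-5)] show ?thesis
    by blast
qed

lemma hawking_mass_nonneg_of_dominant_energy:
  fixes r Kl Kr mu j :: "real \<Rightarrow> real" and l0 :: real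
  assumes r: "smooth_fun r" and Kr: "smooth_fun Kr"
    and "r 0 = 0" and r_pos: "\<And>l. 0 < l \<Longrightarrow> 0 < r l"
    and ham: "\<And>l. l > 0 \<Longrightarrow>
      Kr l * (Kr l + 2 * Kl l) - ((deriv r l)\<^sup>2 + 2 * r l * deriv (deriv r) l - 1) / (r l)\<^sup>2
        = 8 * pi * mu l"
    and mom: "\<And>l. l > 0 \<Longrightarrow> deriv Kr l + deriv r l / r l * (Kr l - Kl l) = 4 * pi * j l"
    and dec: "\<And>l. 0 \<le> l \<Longrightarrow> l \<le> l0 \<Longrightarrow> mu l \<ge> \<bar>j l\<bar>"
    and "0 < l0" and "0 < deriv r l0"
  shows "0 \<le> hawking_mass r Kr l0"
proof (rule ccontr)
  let ?m = "hawking_mass r Kr"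
  assume "\<not> 0 \<le> ?m l0"
  have "continuous_on {0..l0} ?m"
    unfolding hawking_mass_def using r Kr
    by (intro continuous_intros smooth_fun_continuous_on smooth_fun_deriv) simp_all
  moreover have "?m 0 = 0"
    unfolding hawking_mass_def \<open>r 0 = 0\<close> by simp
  ultimately obtain c where c: "0 \<le> c" "c \<le> l0" "0 \<le> ?m c"
    and m_neg: "\<And>x. c < x \<Longrightarrow> x \<le> l0 \<Longrightarrow> ?m x < 0"
    using continuous_on_last_nonneg[of 0 l0 ?m] \<open>0 < l0\<close> by auto
  have gt_one: "1 < (deriv r x)\<^sup>2 - (Kr x * r x)\<^sup>2" if "c < x" "x \<le> l0" for x
  proof -
    have "0 < r x" using r_pos c that by simp
    then show ?thesis
      using deriv_sq_diff_eq_hawking_mass[of r x Kr] m_neg[OF that] by (simp add: divide_neg_pos)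
  qed
  have r'_pos: "0 < deriv r x" if "c < x" "x \<le> l0" for x
  proof -
    have "deriv r y \<noteq> 0" if "x \<le> y" "y \<le> l0" for y
    proof
      assume "deriv r y = 0"
      then show False
        using gt_one[of y] \<open>c < x\<close> that zero_le_power2[of "Kr y * r y"] by simp
    qed
    then show ?thesis
      using continuous_on_nonvanishing_pos_iff[of x l0 "deriv r"] \<open>x \<le> l0\<close> \<open>0 < deriv r l0\<close>
        smooth_fun_continuous_on[OF smooth_fun_deriv[OF r]] by blast
  qed
  have "?m c \<le> ?m l0"
  proof (rule DERIV_nonneg_imp_increasing_open[OF \<open>c \<le> l0\<close> _ \<open>continuous_on {0..l0} ?m\<close>[THEN continuous_on_subset]])
    fix x assume x: "c < x" "x < l0"
    then have "0 < x" using c by simp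
    show "\<exists>y. (?m has_real_derivative y) (at x) \<and> 0 \<le> y"
      using gt_one[of x] r'_pos[of x] dec[of x] x c
      by (intro hawking_mass_deriv_nonneg_of_dominant_energy[of r Kr x Kl "mu x" "j x",
          OF r Kr r_pos[OF \<open>0 < x\<close>] ham[OF \<open>0 < x\<close>] mom[OF \<open>0 < x\<close>]]) auto
  qed (use c in auto)
  then show False using c \<open>\<not> 0 \<le> ?m l0\<close> by simp
qed

lemma flux_eq_enclosed_charge:
  fixes r E rho :: "real \<Rightarrow> real" and l0 Q l :: real
  assumes r: "smooth_fun r" and E: "smooth_fun E"
    and "r 0 = 0" and r_pos: "\<And>l. 0 < l \<Longrightarrow> 0 < r l"
    and gauss: "\<And>l. l > 0 \<Longrightarrow> deriv (\<lambda>s. E s * (r s)\<^sup>2) l / (r l)\<^sup>2 = 4 * pi * rho l"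
    and "0 < l0" and vacuum: "\<And>l. l > l0 \<Longrightarrow> rho l = 0"
    and charge: "Q = 4 * pi * integral {0..l0} (\<lambda>l. rho l * (r l)\<^sup>2)"
    and "l0 \<le> l"
  shows "E l * (r l)\<^sup>2 = Q"
proof -
  define G where "G s = E s * (r s)\<^sup>2" for s
  have G_deriv: "(G has_real_derivative deriv G x) (at x)" for x
    unfolding DERIV_deriv_iff_real_differentiable G_def[abs_def]
    using r E smooth_fun_has_real_derivative real_differentiable_def
    by (metis (no_types) differentiable_mult differentiable_power)
  have G_deriv_eq: "deriv G x = 4 * pi * (rho x * (r x)\<^sup>2)" if "0 < x" for x
    using gauss[OF that] r_pos[OF that] unfolding G_def[abs_def, symmetric]
    by (simp add: field_simps)
  have "G l = G l0"
  proof (rule DERIV_isconst2[of l0 "l + 1"])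
    show "continuous_on {l0..l + 1} G"
      using G_deriv by (meson DERIV_isCont continuous_at_imp_continuous_on)
    show "(G has_real_derivative 0) (at x)" if "l0 < x" "x < l + 1" for x
      using G_deriv[of x] G_deriv_eq[of x] vacuum[of x] that \<open>0 < l0\<close> by simp
  qed (use \<open>l0 \<le> l\<close> in auto)
  moreover have "G l0 = Q"
  proof -
    have "(deriv G has_integral G l0 - G 0) {0..l0}"
      using G_deriv \<open>0 < l0\<close>
      by (intro fundamental_theorem_of_calculus)
        (auto simp: has_real_derivative_iff_has_vector_derivative intro: has_vector_derivative_at_within)
    then have "((\<lambda>x. deriv G x / (4 * pi)) has_integral G l0 / (4 * pi)) {0..l0}"
      using \<open>r 0 = 0\<close> by (simp add: G_def has_integral_divide)
    then have "((\<lambda>x. rho x * (r x)\<^sup>2) has_integral G l0 / (4 * pi)) {0..l0}"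
      by (rule has_integral_spike_finite[of "{0}", rotated 2]) (auto simp: G_deriv_eq)
    then show ?thesis
      using charge by (simp add: integral_unique)
  qed
  ultimately show ?thesis
    unfolding G_def by simp
qed

definition charged_mass :: "(real \<Rightarrow> real) \<Rightarrow> (real \<Rightarrow> real) \<Rightarrow> real \<Rightarrow> real \<Rightarrow> real" where
  "charged_mass r Kr Q l = hawking_mass r Kr l + Q\<^sup>2 / (2 * r l)"

lemma charged_mass_lt_abs:
  assumes "2 * hawking_mass r Kr l < r l" "r l = \<bar>Q\<bar>"
  shows "charged_mass r Kr Q l < \<bar>Q\<bar>"
proof (cases "Q = 0")
  case False
  then have "Q\<^sup>2 / (2 * \<bar>Q\<bar>) = \<bar>Q\<bar> / 2"
    by (simp add: field_simps power2_eq_square)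
  with assms show ?thesis
    unfolding charged_mass_def by simp
qed (use assms in \<open>simp add: charged_mass_def\<close>)

lemma charged_mass_ge_abs:
  assumes "0 \<le> hawking_mass r Kr l" "0 < r l" "2 * r l \<le> \<bar>Q\<bar>"
  shows "\<bar>Q\<bar> \<le> charged_mass r Kr Q l"
proof -
  have "\<bar>Q\<bar> * (2 * r l) \<le> \<bar>Q\<bar> * \<bar>Q\<bar>"
    using assms(3) by (rule mult_left_mono) simp
  then have "\<bar>Q\<bar> \<le> Q\<^sup>2 / (2 * r l)"
    using assms(2) by (simp add: le_divide_eq power2_eq_square)
  with assms(1) show ?thesis
    unfolding charged_mass_def by simp
qed

lemma charged_mass_const:
  fixes r Kl Kr E mu j :: "real \<Rightarrow> real" and l0 Q l :: real
  assumes r: "smooth_fun r" and Kr: "smooth_fun Kr" and r_pos: "\<And>l. 0 < l \<Longrightarrow> 0 < r l"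
    and ham: "\<And>l. l > 0 \<Longrightarrow>
      Kr l * (Kr l + 2 * Kl l) - ((deriv r l)\<^sup>2 + 2 * r l * deriv (deriv r) l - 1) / (r l)\<^sup>2
        = 8 * pi * mu l"
    and mom: "\<And>l. l > 0 \<Longrightarrow> deriv Kr l + deriv r l / r l * (Kr l - Kl l) = 4 * pi * j l"
    and "0 < l0"
    and ev_mu: "\<And>l. l > l0 \<Longrightarrow> mu l - (E l)\<^sup>2 / (8 * pi) = 0"
    and ev_j: "\<And>l. l > l0 \<Longrightarrow> j l = 0"
    and flux: "\<And>l. l > l0 \<Longrightarrow> E l * (r l)\<^sup>2 = Q"
    and "l0 \<le> l"
  shows "charged_mass r Kr Q l = charged_mass r Kr Q l0"
proof (rule DERIV_isconst2[of l0 "l + 1"])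
  let ?F = "charged_mass r Kr Q"
  show "continuous_on {l0..l + 1} ?F"
    unfolding charged_mass_def[abs_def] hawking_mass_def using r Kr
  proof (intro continuous_intros smooth_fun_continuous_on smooth_fun_deriv ballI)
    show "2 * r x \<noteq> 0" if "x \<in> {l0..l + 1}" for x
      using r_pos[of x] that \<open>0 < l0\<close> by simp
  qed simp_all
  fix x assume x: "l0 < x" "x < l + 1"
  then have "0 < x" "0 < r x" using \<open>0 < l0\<close> r_pos by auto
  have "E x = Q / (r x)\<^sup>2"
    using flux[OF x(1)] \<open>0 < r x\<close> by (simp add: eq_divide_eq)
  then have mu: "mu x = (Q / (r x)\<^sup>2)\<^sup>2 / (8 * pi)"
    using ev_mu[OF x(1)] by simp
  have "4 * pi * (r x)\<^sup>2 * (mu x * deriv r x + j x * (Kr x * r x))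
      = Q\<^sup>2 * deriv r x / (2 * (r x)\<^sup>2)"
    unfolding mu ev_j[OF x(1)] using \<open>0 < r x\<close> by (simp add: field_simps power2_eq_square)
  then have "(hawking_mass r Kr has_real_derivative Q\<^sup>2 * deriv r x / (2 * (r x)\<^sup>2)) (at x)"
    using hawking_mass_has_real_derivative[of r Kr x Kl "mu x" "j x",
        OF r Kr \<open>0 < r x\<close> ham[OF \<open>0 < x\<close>] mom[OF \<open>0 < x\<close>]] by simp
  then show "(?F has_real_derivative 0) (at x)"
    unfolding charged_mass_def[abs_def] using smooth_fun_has_real_derivative[OF r, of x] \<open>0 < r x\<close>
    by (auto intro!: derivative_eq_intros simp: field_simps power2_eq_square)
qed (use \<open>l0 \<le> l\<close> in auto)

theorem mainTheorem3:
  fixes r Kl Kr E mu j rho :: "real \<Rightarrow> real" and l0 Q :: real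
  assumes reg: "regular_data r Kl Kr E"
    and af: "asymptotically_flat r Kl Kr"
    and ham: "\<And>l. l > 0 \<Longrightarrow>
      Kr l * (Kr l + 2 * Kl l) - ((deriv r l)\<^sup>2 + 2 * r l * deriv (deriv r) l - 1) / (r l)\<^sup>2
        = 8 * pi * mu l"
    and mom: "\<And>l. l > 0 \<Longrightarrow> deriv Kr l + deriv r l / r l * (Kr l - Kl l) = 4 * pi * j l"
    and gauss: "\<And>l. l > 0 \<Longrightarrow> deriv (\<lambda>s. E s * (r s)\<^sup>2) l / (r l)\<^sup>2 = 4 * pi * rho l"
    and l0: "l0 > 0"
    and dec: "\<And>l. 0 \<le> l \<Longrightarrow> l \<le> l0 \<Longrightarrow> mu l \<ge> \<bar>j l\<bar>"
    and ev_mu: "\<And>l. l > l0 \<Longrightarrow> mu l - (E l)\<^sup>2 / (8 * pi) = 0"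
    and ev_j: "\<And>l. l > l0 \<Longrightarrow> j l = 0"
    and ev_rho: "\<And>l. l > l0 \<Longrightarrow> rho l = 0"
    and charge: "Q = 4 * pi * integral {0..l0} (\<lambda>l. rho l * (r l)\<^sup>2)"
    and bound: "2 * r l0 \<le> \<bar>Q\<bar>"
  shows "\<not> untrapped_on r Kr {l0..}"
proof
  assume untrapped: "untrapped_on r Kr {l0..}"
  have r: "smooth_fun r" and Kr: "smooth_fun Kr" and E: "smooth_fun E"
    and "r 0 = 0" and r_pos: "\<And>l. 0 < l \<Longrightarrow> 0 < r l"
    using reg unfolding regular_data_def by auto
  have r_top: "filterlim r at_top at_top"
    using af unfolding asymptotically_flat_def by simp
  have expanding: "(Kr l * r l)\<^sup>2 < (deriv r l)\<^sup>2" if "l0 \<le> l" for l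
    using untrapped that theta_plus_mult_theta_minus_pos_iff[of r l Kr] r_pos[of l] l0
    unfolding untrapped_on_def by auto
  have "0 < deriv r l0"
  proof (rule deriv_pos_of_filterlim_at_top[OF r_top smooth_fun_has_real_derivative[OF r]])
    show "continuous_on {l0..} (deriv r)"
      using r by (intro smooth_fun_continuous_on smooth_fun_deriv)
    show "deriv r l \<noteq> 0" if "l0 \<le> l" for l
      using expanding[OF that] by auto
  qed
  with r Kr \<open>r 0 = 0\<close> r_pos ham mom dec l0 have "0 \<le> hawking_mass r Kr l0"
    by (rule hawking_mass_nonneg_of_dominant_energy)
  have flux: "E l * (r l)\<^sup>2 = Q" if "l0 < l" for l
    using flux_eq_enclosed_charge[OF r E \<open>r 0 = 0\<close> r_pos gauss l0 ev_rho charge less_imp_le[OF that]] .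
  have "0 < r l0"
    using r_pos l0 by simp
  with bound have "r l0 \<le> \<bar>Q\<bar>"
    by simp
  then obtain ls where ls: "l0 \<le> ls" "r ls = \<bar>Q\<bar>"
    by (rule filterlim_at_top_IVT[OF smooth_fun_continuous_on[OF r] r_top])
  have "charged_mass r Kr Q ls = charged_mass r Kr Q l0"
    by (rule charged_mass_const[OF r Kr r_pos ham mom l0 ev_mu ev_j flux ls(1)])
  moreover have "charged_mass r Kr Q ls < \<bar>Q\<bar>"
    using expanding[OF ls(1)] hawking_mass_lt_iff[of r ls Kr] r_pos[of ls] ls l0
    by (intro charged_mass_lt_abs) simp_all
  moreover have "\<bar>Q\<bar> \<le> charged_mass r Kr Q l0"
    by (rule charged_mass_ge_abs) fact+
  ultimately show False
    by simp
qed

end
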